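(* Consider the mixture of regressions model with $\sigma=1$. There exist universal constants $\eta_0>0$ and $\gamma\in[0,1/4)$ such that if $\|\theta^*\|_2\ge\eta_0$ and $\|\theta-\theta^*\|_2\le\|\theta^*\|_2/32$, then for each $u\in[0,1]$, with $\theta_u=\theta^*+u(\theta-\theta^* )$ and $W_u=Y\langle X,\theta_u\rangle$, $$\sqrt{\mathbb{E}\Big[\frac{Y^2\langle X,\theta_u\rangle^2}{(e^{W_u}+e^{-W_u})^4}\Big]}\le\frac{\gamma}{14},$$ and, whenever in addition $\|\theta-\theta^*\|_2\le1$, $$\sqrt{\mathbb{E}\Big[\frac{Y^2}{(e^{W_u}+e^{-W_u})^4}\Big]}\le\frac{\gamma}{32}.$$
   Context: Mixture of regressions with $\sigma=1$: $X\sim N(0,I_d)$, $\varepsilon\sim N(0,1)$, $B$ a uniform random sign in $\{-1,+1\}$, mutually independent; $Y=B\langle X,\theta^*\rangle+\varepsilon$. *)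

theory Defs
  imports "HOL-Probability.Probability"
begin

(* Vectors in R^d are represented as functions nat => real; only the coordinates i < d matter. *)

definition ip :: "nat \<Rightarrow> (nat \<Rightarrow> real) \<Rightarrow> (nat \<Rightarrow> real) \<Rightarrow> real" where
  "ip d x y = (\<Sum>i<d. x i * y i)"

definition enorm :: "nat \<Rightarrow> (nat \<Rightarrow> real) \<Rightarrow> real" where
  "enorm d x = sqrt (\<Sum>i<d. (x i)\<^sup>2)"

definition gauss1 :: "real measure" where
  "gauss1 = density lborel std_normal_density"

definition gauss_vec :: "nat \<Rightarrow> (nat \<Rightarrow> real) measure" where
  "gauss_vec d = PiM {..<d} (\<lambda>_. gauss1)"

definition mor_model :: "nat \<Rightarrow> (((nat \<Rightarrow> real) \<times> real) \<times> real) measure" where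
  "mor_model d = (gauss_vec d \<Otimes>\<^sub>M gauss1) \<Otimes>\<^sub>M measure_pmf (pmf_of_set {-1, 1})"

definition resp :: "nat \<Rightarrow> (nat \<Rightarrow> real) \<Rightarrow> ((nat \<Rightarrow> real) \<times> real) \<times> real \<Rightarrow> real" where
  "resp d ths \<omega> = (case \<omega> of ((X, eps), B) \<Rightarrow> B * ip d X ths + eps)"

end

theory Submission
  imports Defs
begin

text \<open>
  Write \<open>W = Y \<langle>X, a\<rangle>\<close> with \<open>a = \<theta>\<^sub>u\<close>. Since \<open>e\<^sup>w + e\<^sup>-\<^sup>w \<ge> 1 + \<bar>w\<bar>\<close>, the function
  \<open>w\<^sup>2 / (e\<^sup>w + e\<^sup>-\<^sup>w)\<^sup>4\<close> is at most \<open>1 / (1 + w\<^sup>2)\<close>. Fix a scale \<open>c\<close>. The first integrand is at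
  most \<open>1 / c\<^sup>4\<close> unless \<open>\<bar>W\<bar> < c\<^sup>2\<close>, which forces \<open>\<bar>\<langle>X, a\<rangle>\<bar> < c\<close>, \<open>\<bar>\<langle>X, \<theta>*\<rangle>\<bar> < 2c\<close> or \<open>\<bar>\<epsilon>\<bar> \<ge> c\<close>.
  The second integrand is at most \<open>1 / c\<^sup>2\<close> unless \<open>\<bar>\<langle>X, a\<rangle>\<bar> < c\<close>, and on that event
  \<open>Y\<^sup>2 \<le> 10 c\<^sup>2 + 4 \<langle>X, a - \<theta>*\<rangle>\<^sup>4 / c\<^sup>2 + 2 \<epsilon>\<^sup>4 / c\<^sup>2\<close>. As \<open>\<langle>X, v\<rangle> \<sim> N(0, \<parallel>v\<parallel>\<^sup>2)\<close>, the event
  \<open>\<bar>\<langle>X, v\<rangle>\<bar> < r\<close> has probability at most \<open>r / \<parallel>v\<parallel>\<close>, and \<open>E \<langle>X, v\<rangle>\<^sup>4 = 3 \<parallel>v\<parallel>\<^sup>4\<close>. Both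
  expectations are therefore \<open>O(1 / c\<^sup>2)\<close> as soon as \<open>\<parallel>\<theta>*\<parallel> \<ge> c\<^sup>5\<close>, because
  \<open>\<parallel>a\<parallel> \<ge> \<parallel>\<theta>*\<parallel> / 2\<close> and \<open>\<parallel>a - \<theta>*\<parallel> \<le> \<parallel>\<theta> - \<theta>*\<parallel>\<close>; the choice \<open>c = 1000\<close>, \<open>\<eta>\<^sub>0 = 10\<^sup>1\<^sup>6\<close>
  gives \<open>\<gamma> = 1/5\<close>.
\<close>

section \<open>Elementary inequalities\<close>

lemma one_plus_abs_le_exp_plus_exp_minus: "1 + \<bar>t::real\<bar> \<le> exp t + exp (- t)"
proof (cases "t < 0")
  case True
  with exp_ge_add_one_self[of "- t"] exp_gt_zero[of t] show ?thesis
    by linarith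
next
  case False
  with exp_ge_add_one_self[of t] exp_gt_zero[of "- t"] show ?thesis
    by linarith
qed

lemma sq_div_exp_plus_exp_minus_pow4_le: "(w::real)\<^sup>2 / (exp w + exp (- w)) ^ 4 \<le> 1 / (1 + w\<^sup>2)"
proof -
  have "1 + w\<^sup>2 \<le> (1 + \<bar>w\<bar>)\<^sup>2"
    by (simp add: power2_eq_square algebra_simps)
  then have "w\<^sup>2 * (1 + w\<^sup>2) \<le> (1 + \<bar>w\<bar>)\<^sup>2 * (1 + \<bar>w\<bar>)\<^sup>2"
    by (intro mult_mono) auto
  also have "\<dots> \<le> (exp w + exp (- w)) ^ 4"
    using power_mono[OF one_plus_abs_le_exp_plus_exp_minus[of w], of 4]
    by (simp add: power2_eq_square power4_eq_xxxx)
  finally show ?thesis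
    by (simp add: divide_simps add_pos_nonneg)
qed

lemma sq_add_le: "(p + q)\<^sup>2 \<le> 2 * p\<^sup>2 + 2 * (q::real)\<^sup>2"
  using zero_le_power2[of "p - q"] by (simp add: power2_eq_square algebra_simps)

lemma sq_le_sq_add_pow4_div:
  fixes x c :: real
  assumes "0 < c"
  shows "x\<^sup>2 \<le> c\<^sup>2 + x ^ 4 / c\<^sup>2"
proof -
  have "0 \<le> (x\<^sup>2 - c\<^sup>2)\<^sup>2" "0 \<le> x\<^sup>2 * c\<^sup>2"
    by simp_all
  moreover have "(x\<^sup>2)\<^sup>2 = x ^ 4" "(c\<^sup>2)\<^sup>2 = c\<^sup>2 * c\<^sup>2"
    by (simp_all add: power2_eq_square power4_eq_xxxx)
  ultimately have "x\<^sup>2 * c\<^sup>2 \<le> c\<^sup>2 * c\<^sup>2 + x ^ 4"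
    unfolding power2_diff by linarith
  then show ?thesis
    using assms by (simp add: field_simps power2_eq_square)
qed

lemma response_sq_mul_sq_div_le:
  fixes y a z e b c :: real
  assumes c: "1 \<le> c" and b: "b \<in> {-1, 1}" and y: "y = b * z + e"
  shows "y\<^sup>2 * a\<^sup>2 / (exp (y * a) + exp (- (y * a))) ^ 4
     \<le> indicator {-c<..<c} a + indicator {-(2*c)<..<2*c} z + e\<^sup>2 / c\<^sup>2 + 1 / c ^ 4"
proof -
  define w where "w = y * a"
  have lhs: "y\<^sup>2 * a\<^sup>2 / (exp (y * a) + exp (- (y * a))) ^ 4 \<le> 1 / (1 + w\<^sup>2)"
    using sq_div_exp_plus_exp_minus_pow4_le[of w] by (simp add: w_def power_mult_distrib)
  show ?thesis
  proof (cases "\<bar>w\<bar> < c\<^sup>2")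
    case True
    have "\<bar>a\<bar> < c \<or> \<bar>z\<bar> < 2 * c \<or> c \<le> \<bar>e\<bar>"
    proof (rule ccontr)
      assume "\<not> ?thesis"
      then have "c \<le> \<bar>a\<bar>" "c \<le> \<bar>y\<bar>"
        using b y by auto
      then have "c * c \<le> \<bar>y\<bar> * \<bar>a\<bar>"
        using c by (intro mult_mono) auto
      with True show False
        by (simp add: w_def abs_mult power2_eq_square)
    qed
    moreover have "1 \<le> e\<^sup>2 / c\<^sup>2" if "c \<le> \<bar>e\<bar>"
      using c power_mono[OF that, of 2] by simp
    ultimately have "1 \<le> indicator {-c<..<c} a + indicator {-(2*c)<..<2*c} z + e\<^sup>2 / c\<^sup>2"
      by (auto simp: indicator_def abs_less_iff)
    moreover have "1 / (1 + w\<^sup>2) \<le> 1" "0 \<le> 1 / c ^ 4"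
      by (simp_all add: divide_le_eq_1_pos add_pos_nonneg)
    ultimately show ?thesis
      using lhs by linarith
  next
    case False
    then have "c ^ 4 \<le> w\<^sup>2"
      using power_mono[of "c\<^sup>2" "\<bar>w\<bar>" 2] by (simp add: power_even_abs)
    then have "1 / (1 + w\<^sup>2) \<le> 1 / c ^ 4"
      using c by (intro divide_left_mono mult_pos_pos) (auto simp: add_pos_nonneg)
    moreover have "0 \<le> indicator {-c<..<c} a + indicator {-(2*c)<..<2*c} z + e\<^sup>2 / c\<^sup>2"
      by simp
    ultimately show ?thesis
      using lhs by linarith
  qed
qed

lemma response_sq_div_le:
  fixes y a z e b c :: real
  assumes c: "0 < c" and b: "b \<in> {-1, 1}" and y: "y = b * z + e"
  shows "y\<^sup>2 / (exp (y * a) + exp (- (y * a))) ^ 4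
     \<le> 1 / c\<^sup>2 + 10 * c\<^sup>2 * indicator {-c<..<c} a + 4 * (a - z) ^ 4 / c\<^sup>2 + 2 * e ^ 4 / c\<^sup>2"
proof -
  have rest: "0 \<le> 10 * c\<^sup>2 * indicator {-c<..<c} a + 4 * (a - z) ^ 4 / c\<^sup>2 + 2 * e ^ 4 / c\<^sup>2"
    by (simp add: zero_le_even_power)
  show ?thesis
  proof (cases "\<bar>a\<bar> < c")
    case False
    have "y\<^sup>2 / (exp (y * a) + exp (- (y * a))) ^ 4
        = (y * a)\<^sup>2 / (exp (y * a) + exp (- (y * a))) ^ 4 / a\<^sup>2"
      using False c by (simp add: power_mult_distrib)
    also have "\<dots> \<le> 1 / a\<^sup>2"
    proof (rule divide_right_mono)
      have "1 / (1 + (y * a)\<^sup>2) \<le> 1"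
        by (simp add: divide_le_eq_1_pos add_pos_nonneg)
      then show "(y * a)\<^sup>2 / (exp (y * a) + exp (- (y * a))) ^ 4 \<le> 1"
        using sq_div_exp_plus_exp_minus_pow4_le[of "y * a"] by linarith
    qed simp
    also have "\<dots> \<le> 1 / c\<^sup>2"
      using False c abs_le_square_iff[of c a] by (intro divide_left_mono mult_pos_pos) auto
    finally show ?thesis
      using rest by linarith
  next
    case True
    have "1 \<le> (exp (y * a) + exp (- (y * a))) ^ 4"
      using one_plus_abs_le_exp_plus_exp_minus[of "y * a"] by (intro one_le_power) linarith
    then have "y\<^sup>2 / (exp (y * a) + exp (- (y * a))) ^ 4 \<le> y\<^sup>2"
      by (simp add: divide_le_eq mult_le_cancel_left1)
    moreover have "y\<^sup>2 \<le> 2 * z\<^sup>2 + 2 * e\<^sup>2"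
      using sq_add_le[of "b * z" e] b by (auto simp: y)
    moreover have "z\<^sup>2 \<le> 2 * a\<^sup>2 + 2 * (a - z)\<^sup>2"
      using sq_add_le[of a "z - a"] by (simp add: power2_commute)
    moreover have "a\<^sup>2 \<le> c\<^sup>2"
      using power_mono[of "\<bar>a\<bar>" c 2] True by simp
    moreover have "10 * c\<^sup>2 * indicator {-c<..<c} a = 10 * c\<^sup>2"
      using True by (simp add: abs_less_iff)
    moreover have "4 * (a - z) ^ 4 / c\<^sup>2 = 4 * ((a - z) ^ 4 / c\<^sup>2)" "2 * e ^ 4 / c\<^sup>2 = 2 * (e ^ 4 / c\<^sup>2)"
      "0 \<le> 1 / c\<^sup>2"
      by simp_all
    \<comment> \<open>\<open>x\<^sup>2 \<le> c\<^sup>2 + x\<^sup>4 / c\<^sup>2\<close> trades the unbounded squares for fourth moments damped by \<open>1 / c\<^sup>2\<close>\<close>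
    ultimately show ?thesis
      using sq_le_sq_add_pow4_div[OF c, of "a - z"] sq_le_sq_add_pow4_div[OF c, of e] by linarith
  qed
qed

lemma sqrt_le_if_le_sq: "x \<le> b\<^sup>2 \<Longrightarrow> 0 \<le> b \<Longrightarrow> sqrt x \<le> (b::real)"
  using real_sqrt_le_mono[of x "b\<^sup>2"] by simp

lemma ip_diff: "ip d x (\<lambda>i. v i - w i) = ip d x v - ip d x w"
  unfolding ip_def by (simp add: algebra_simps sum_subtractf)

lemma ip_eq_0_if_enorm_eq_0: "enorm d v = 0 \<Longrightarrow> ip d x v = 0"
  unfolding enorm_def ip_def by (simp add: sum_nonneg_eq_0_iff)

lemma enorm_eq_L2_set: "enorm d v = L2_set v {..<d}"
  unfolding enorm_def L2_set_def by simp

lemma enorm_nonneg: "0 \<le> enorm d v"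
  by (simp add: enorm_eq_L2_set)

lemma enorm_scale: "enorm d (\<lambda>i. c * v i) = \<bar>c\<bar> * enorm d v"
  unfolding enorm_eq_L2_set L2_set_def
  by (simp add: power_mult_distrib sum_distrib_left[symmetric] real_sqrt_mult)

lemma enorm_le_add_enorm_diff: "enorm d w \<le> enorm d v + enorm d (\<lambda>i. v i - w i)"
proof -
  have "L2_set w {..<d} \<le> L2_set v {..<d} + L2_set (\<lambda>i. w i - v i) {..<d}"
    using L2_set_triangle_ineq[of v "\<lambda>i. w i - v i" "{..<d}"] by simp
  moreover have "L2_set (\<lambda>i. w i - v i) {..<d} = L2_set (\<lambda>i. v i - w i) {..<d}"
    by (simp add: L2_set_def power2_commute)
  ultimately show ?thesis
    by (simp add: enorm_eq_L2_set)
qed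

lemma enorm_interpolant_diff_le:
  assumes "0 \<le> u" "u \<le> 1"
  shows "enorm d (\<lambda>i. (ths i + u * (th i - ths i)) - ths i) \<le> enorm d (\<lambda>i. th i - ths i)"
  using enorm_scale[of d u "\<lambda>i. th i - ths i"] mult_right_mono[OF assms(2) enorm_nonneg] assms(1)
  by simp

section \<open>Measure theory\<close>

lemma has_bochner_integral_const_prob_space:
  "prob_space M \<Longrightarrow> has_bochner_integral M (\<lambda>_. k) (k::real)"
  by (simp add: has_bochner_integral_iff prob_space.prob_space finite_measure.integrable_const
      prob_space.finite_measure)

text \<open>No integrability of \<open>f\<close> is needed: otherwise its integral is \<open>0\<close> by convention.\<close>

lemma integral_le_if_AE_le_has_bochner_integral:
  fixes f g :: "'a \<Rightarrow> real"
  assumes "AE x in M. f x \<le> g x" "has_bochner_integral M g I" "I \<le> K" "0 \<le> K"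
  shows "integral\<^sup>L M f \<le> K"
proof (cases "integrable M f")
  case True
  then show ?thesis
    using integral_mono_AE[OF True _ assms(1)] assms(2,3) by (auto simp: has_bochner_integral_iff)
next
  case False
  then show ?thesis
    using assms(4) by (simp add: not_integrable_integral_eq)
qed

lemma has_bochner_integral_distr_eq:
  fixes f :: "'b \<Rightarrow> real"
  assumes "g \<in> measurable M N" "distr M N g = N" "has_bochner_integral N f I"
  shows "has_bochner_integral M (\<lambda>x. f (g x)) I"
proof -
  have f: "f \<in> borel_measurable N"
    using assms(3) by (auto simp: has_bochner_integral_iff)
  show ?thesis
    using assms(2,3) integrable_distr_eq[OF assms(1) f] integral_distr[OF assms(1) f]
    by (simp add: has_bochner_integral_iff)
qed

lemma distr_pair_snd:
  assumes "prob_space M" "prob_space N"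
  shows "distr (M \<Otimes>\<^sub>M N) N snd = N"
proof (intro measure_eqI)
  fix A assume A: "A \<in> sets (distr (M \<Otimes>\<^sub>M N) N snd)"
  then have "emeasure (distr (M \<Otimes>\<^sub>M N) N snd) A = emeasure (M \<Otimes>\<^sub>M N) (space M \<times> A)"
    by (auto simp: emeasure_distr space_pair_measure dest: sets.sets_into_space
        intro!: arg_cong2[where f=emeasure])
  with A assms show "emeasure (distr (M \<Otimes>\<^sub>M N) N snd) A = emeasure N A"
    by (simp add: prob_space.emeasure_space_1 prob_space_imp_sigma_finite
        sigma_finite_measure.emeasure_pair_measure_Times)
qed simp

lemma indep_vars_PiM_components:
  assumes "finite I" "I \<noteq> {}" and M: "\<And>i. i \<in> I \<Longrightarrow> prob_space (M i)"
  shows "prob_space.indep_vars (PiM I M) M (\<lambda>i x. x i) I"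
proof -
  interpret prob_space "PiM I M" by (rule prob_space_PiM) (rule M)
  have "distr (PiM I M) (PiM I M) (\<lambda>x. \<lambda>i\<in>I. x i) = distr (PiM I M) (PiM I M) (\<lambda>x. x)"
    by (rule distr_cong) (auto simp: space_PiM)
  moreover have "(\<Pi>\<^sub>M i\<in>I. distr (PiM I M) (M i) (\<lambda>x. x i)) = PiM I M"
    by (intro PiM_cong refl distr_PiM_component M)
  ultimately show ?thesis
    using assms(2) by (subst indep_vars_iff_distr_eq_PiM') auto
qed

lemma normal_density_le:
  assumes "0 < \<sigma>"
  shows "normal_density \<mu> \<sigma> t \<le> 1 / (2 * \<sigma>)"
proof -
  have "(2 * \<sigma>)\<^sup>2 \<le> 2 * pi * \<sigma>\<^sup>2"
    using pi_gt3 assms by (simp add: power2_eq_square)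
  then have "2 * \<sigma> \<le> sqrt (2 * pi * \<sigma>\<^sup>2)"
    by (rule real_le_rsqrt)
  have "normal_density \<mu> \<sigma> t \<le> 1 / sqrt (2 * pi * \<sigma>\<^sup>2) * 1"
    unfolding normal_density_def by (rule mult_left_mono) simp_all
  also have "\<dots> \<le> 1 / (2 * \<sigma>)"
    using \<open>2 * \<sigma> \<le> sqrt (2 * pi * \<sigma>\<^sup>2)\<close> assms by (simp add: frac_le)
  finally show ?thesis .
qed

lemma integral_normal_density_indicator_le:
  assumes "0 < \<sigma>" "0 \<le> r"
  shows "(\<integral>t. normal_density \<mu> \<sigma> t * indicator {-r<..<r} t \<partial>lborel) \<le> r / \<sigma>"
proof -
  have "(\<integral>t. normal_density \<mu> \<sigma> t * indicator {-r<..<r} t \<partial>lborel)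
      \<le> (\<integral>t. 1 / (2 * \<sigma>) * indicator {-r<..<r} t \<partial>lborel)"
    using assms
    by (intro integral_mono integrable_real_mult_indicator integrable_normal_density
        integrable_mult_right integrable_real_indicator)
       (auto simp: indicator_def normal_density_le emeasure_lborel_Ioo)
  also have "\<dots> = r / \<sigma>"
    using assms by simp
  finally show ?thesis .
qed

section \<open>The Gaussian design\<close>

lemma prob_space_gauss1: "prob_space gauss1"
  unfolding gauss1_def by (rule prob_space_normal_density) simp

lemma sets_gauss1 [simp, measurable_cong]: "sets gauss1 = sets borel"
  by (simp add: gauss1_def)

lemma space_gauss1 [simp]: "space gauss1 = UNIV"
  by (simp add: gauss1_def)

lemma prob_space_gauss_vec: "prob_space (gauss_vec d)"
  unfolding gauss_vec_def by (rule prob_space_PiM) (simp add: prob_space_gauss1)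

lemma distributed_gauss_vec_component:
  assumes "i < d"
  shows "distributed (gauss_vec d) lborel (\<lambda>x. x i) std_normal_density"
proof -
  have "distr (gauss_vec d) lborel (\<lambda>x. x i) = distr (gauss_vec d) gauss1 (\<lambda>x. x i)"
    by (rule distr_cong) auto
  also have "\<dots> = gauss1"
    unfolding gauss_vec_def by (rule distr_PiM_component) (use assms prob_space_gauss1 in auto)
  finally show ?thesis
    using assms by (auto simp: distributed_def gauss1_def gauss_vec_def)
qed

lemma distributed_ip_gauss_vec:
  assumes "0 < enorm d v"
  shows "distributed (gauss_vec d) lborel (\<lambda>x. ip d x v) (normal_density 0 (enorm d v))"
proof -
  interpret prob_space "gauss_vec d" by (rule prob_space_gauss_vec)
  \<comment> \<open>\<open>sum_indep_normal\<close> needs positive variances, so drop the coordinates with \<open>v i = 0\<close>\<close>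
  define I where "I = {i\<in>{..<d}. v i \<noteq> 0}"
  have "I \<noteq> {}"
    using assms unfolding I_def enorm_def by (auto intro: ccontr)
  moreover have "finite I" "I \<subseteq> {..<d}"
    unfolding I_def by auto
  moreover have "indep_vars (\<lambda>_. borel) (\<lambda>i x. x i * v i) I"
    using indep_vars_PiM_components[of "{..<d}" "\<lambda>_. gauss1"] \<open>I \<noteq> {}\<close> \<open>I \<subseteq> {..<d}\<close>
    by (intro indep_vars_subset[OF indep_vars_compose2[where Y="\<lambda>i y. y * v i"]])
       (auto simp: gauss_vec_def prob_space_gauss1)
  moreover have "distributed (gauss_vec d) lborel (\<lambda>x. x i * v i) (normal_density 0 \<bar>v i\<bar>)"
    if "i \<in> I" for i
  proof -
    have "i < d" "v i \<noteq> 0"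
      using that by (auto simp: I_def)
    then show ?thesis
      using normal_density_affine[OF distributed_gauss_vec_component[OF \<open>i < d\<close>], of "v i" 0]
      by (simp add: mult.commute)
  qed
  ultimately have "distributed (gauss_vec d) lborel (\<lambda>x. \<Sum>i\<in>I. x i * v i)
      (normal_density (\<Sum>i\<in>I. 0) (sqrt (\<Sum>i\<in>I. \<bar>v i\<bar>\<^sup>2)))"
    by (intro sum_indep_normal) (auto simp: I_def)
  moreover have "(\<Sum>i\<in>I. x i * v i) = ip d x v" for x
    unfolding ip_def I_def by (rule sum.mono_neutral_left) auto
  moreover have "(\<Sum>i\<in>I. \<bar>v i\<bar>\<^sup>2) = (\<Sum>i<d. (v i)\<^sup>2)"
    unfolding I_def power2_abs by (rule sum.mono_neutral_left) auto
  ultimately show ?thesis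
    by (simp add: enorm_def)
qed

lemma ip_measurable [measurable]: "(\<lambda>x. ip d x v) \<in> borel_measurable (gauss_vec d)"
  unfolding ip_def gauss_vec_def by measurable

lemma integral_indicator_ip_gauss_vec_le:
  assumes "0 < enorm d v" "0 \<le> r"
  shows "(\<integral>x. indicator {-r<..<r} (ip d x v) \<partial>gauss_vec d) \<le> r / enorm d v"
  using distributed_integral[OF distributed_ip_gauss_vec[OF assms(1)], of "indicator {-r<..<r}"]
    integral_normal_density_indicator_le[OF assms, of 0] normal_density_nonneg
  by simp

lemma integrable_indicator_ip_gauss_vec:
  "integrable (gauss_vec d) (\<lambda>x. indicator {-r<..<r} (ip d x v) :: real)"
proof -
  have "(\<lambda>x. indicator {-r<..<r} (ip d x v) :: real) \<in> borel_measurable (gauss_vec d)"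
    by measurable
  then show ?thesis
    using prob_space_gauss_vec
    by (intro finite_measure.integrable_const_bound[where B=1] prob_space.finite_measure)
       (auto simp: indicator_def)
qed

lemma has_bochner_integral_ip_pow4_gauss_vec:
  "has_bochner_integral (gauss_vec d) (\<lambda>x. (ip d x v) ^ 4) (3 * enorm d v ^ 4)"
proof (cases "enorm d v = 0")
  case True
  then show ?thesis
    by (simp add: ip_eq_0_if_enorm_eq_0 has_bochner_integral_zero)
next
  case False
  then have \<sigma>: "0 < enorm d v"
    unfolding enorm_def by (simp add: sum_nonneg order_less_le)
  have "has_bochner_integral lborel (\<lambda>t. normal_density 0 (enorm d v) t * (t - 0) ^ (2 * 2))
      (fact (2 * 2) / ((2 / (enorm d v)\<^sup>2) ^ 2 * fact 2))"
    by (rule normal_moment_even[OF \<sigma>])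
  moreover have "fact (2 * 2) / ((2 / (enorm d v)\<^sup>2) ^ 2 * fact 2) = 3 * enorm d v ^ 4"
    using \<sigma> by (simp add: fact_numeral field_simps)
  ultimately have "has_bochner_integral lborel (\<lambda>t. normal_density 0 (enorm d v) t * t ^ 4)
      (3 * enorm d v ^ 4)"
    by simp
  then show ?thesis
    using distributed_integrable[OF distributed_ip_gauss_vec[OF \<sigma>], of "\<lambda>t. t ^ 4"]
      distributed_integral[OF distributed_ip_gauss_vec[OF \<sigma>], of "\<lambda>t. t ^ 4"]
    by (simp add: has_bochner_integral_iff normal_density_nonneg)
qed

lemma has_bochner_integral_gauss1_power:
  "has_bochner_integral gauss1 (\<lambda>e. e\<^sup>2) 1"
  "has_bochner_integral gauss1 (\<lambda>e. e ^ 4) 3"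
proof -
  have "has_bochner_integral lborel (\<lambda>t. std_normal_density t * t ^ (2 * k)) (fact (2 * k) / (2 ^ k * fact k))"
    for k
    by (rule std_normal_moment_even)
  from this[of 1] this[of 2] show "has_bochner_integral gauss1 (\<lambda>e. e\<^sup>2) 1"
    "has_bochner_integral gauss1 (\<lambda>e. e ^ 4) 3"
    unfolding gauss1_def
    by (auto simp: has_bochner_integral_iff integrable_real_density integral_real_density
        normal_density_nonneg fact_numeral)
qed

section \<open>The mixture of regressions model\<close>

lemma prob_space_mor_model: "prob_space (mor_model d)"
  unfolding mor_model_def
  by (intro prob_space_pair prob_space_gauss_vec prob_space_gauss1 measure_pmf.prob_space_axioms)

lemma has_bochner_integral_mor_model_covariate:
  fixes f :: "(nat \<Rightarrow> real) \<Rightarrow> real"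
  shows "has_bochner_integral (gauss_vec d) f I
    \<Longrightarrow> has_bochner_integral (mor_model d) (\<lambda>\<omega>. f (fst (fst \<omega>))) I"
  unfolding mor_model_def
  by (intro has_bochner_integral_distr_eq[where g=fst, OF measurable_fst]
      has_bochner_integral_distr_eq[where g=fst and f=f, OF measurable_fst]
      prob_space.distr_pair_fst prob_space_gauss1 measure_pmf.prob_space_axioms)

lemma has_bochner_integral_mor_model_noise:
  fixes f :: "real \<Rightarrow> real"
  shows "has_bochner_integral gauss1 f I
    \<Longrightarrow> has_bochner_integral (mor_model d) (\<lambda>\<omega>. f (snd (fst \<omega>))) I"
  unfolding mor_model_def
  by (intro has_bochner_integral_distr_eq[where g=fst, OF measurable_fst]
      has_bochner_integral_distr_eq[where g=snd and f=f, OF measurable_snd]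
      prob_space.distr_pair_fst distr_pair_snd prob_space_gauss_vec prob_space_gauss1
      measure_pmf.prob_space_axioms)

lemma AE_mor_model_sign: "AE \<omega> in mor_model d. snd \<omega> \<in> {-1, 1}"
proof -
  interpret pair_sigma_finite "gauss_vec d \<Otimes>\<^sub>M gauss1" "measure_pmf (pmf_of_set {-1, 1::real})"
    by (intro pair_sigma_finite.intro prob_space_imp_sigma_finite prob_space_pair
        prob_space_gauss_vec prob_space_gauss1 measure_pmf.prob_space_axioms)
  have "AE x in gauss_vec d \<Otimes>\<^sub>M gauss1. AE b in measure_pmf (pmf_of_set {-1, 1}). b \<in> {-1, 1::real}"
    by (simp add: AE_measure_pmf_iff)
  then show ?thesis
    unfolding mor_model_def by (intro AE_pair_measure) auto
qed

lemma resp_eq: "resp d ths \<omega> = snd \<omega> * ip d (fst (fst \<omega>)) ths + snd (fst \<omega>)"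
  by (cases \<omega>) (auto simp: resp_def)

lemma has_bochner_integral_indicator_ip_mor_model_le:
  assumes "0 < enorm d v" "0 \<le> r"
  obtains p where "has_bochner_integral (mor_model d) (\<lambda>\<omega>. indicator {-r<..<r} (ip d (fst (fst \<omega>)) v)) p"
    and "p \<le> r / enorm d v"
  using has_bochner_integral_mor_model_covariate[OF has_bochner_integral_integrable[OF
      integrable_indicator_ip_gauss_vec]] integral_indicator_ip_gauss_vec_le[OF assms]
  by blast

lemma integral_response_sq_ip_sq_div_le:
  assumes c: "1 \<le> c" and a: "0 < enorm d a" and ths: "0 < enorm d ths"
  shows "(\<integral>\<omega>. (resp d ths \<omega>)\<^sup>2 * (ip d (fst (fst \<omega>)) a)\<^sup>2
            / (exp (resp d ths \<omega> * ip d (fst (fst \<omega>)) a)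
               + exp (- (resp d ths \<omega> * ip d (fst (fst \<omega>)) a))) ^ 4 \<partial>mor_model d)
         \<le> c / enorm d a + 2 * c / enorm d ths + 1 / c\<^sup>2 + 1 / c ^ 4"
proof -
  have "0 \<le> c" "0 \<le> 2 * c"
    using c by simp_all
  obtain p where p: "has_bochner_integral (mor_model d)
      (\<lambda>\<omega>. indicator {-c<..<c} (ip d (fst (fst \<omega>)) a)) p" "p \<le> c / enorm d a"
    using has_bochner_integral_indicator_ip_mor_model_le[OF a \<open>0 \<le> c\<close>] by blast
  obtain q where q: "has_bochner_integral (mor_model d)
      (\<lambda>\<omega>. indicator {-(2*c)<..<2*c} (ip d (fst (fst \<omega>)) ths)) q" "q \<le> 2 * c / enorm d ths"
    using has_bochner_integral_indicator_ip_mor_model_le[OF ths \<open>0 \<le> 2 * c\<close>] by blast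
  have "has_bochner_integral (mor_model d)
      (\<lambda>\<omega>. indicator {-c<..<c} (ip d (fst (fst \<omega>)) a) + indicator {-(2*c)<..<2*c} (ip d (fst (fst \<omega>)) ths)
         + (snd (fst \<omega>))\<^sup>2 / c\<^sup>2 + 1 / c ^ 4)
      (p + q + 1 / c\<^sup>2 + 1 / c ^ 4)"
    by (intro has_bochner_integral_add p(1) q(1) has_bochner_integral_divide_zero
        has_bochner_integral_mor_model_noise has_bochner_integral_gauss1_power
        has_bochner_integral_const_prob_space prob_space_mor_model)
  moreover have "AE \<omega> in mor_model d.
      (resp d ths \<omega>)\<^sup>2 * (ip d (fst (fst \<omega>)) a)\<^sup>2
        / (exp (resp d ths \<omega> * ip d (fst (fst \<omega>)) a) + exp (- (resp d ths \<omega> * ip d (fst (fst \<omega>)) a))) ^ 4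
      \<le> indicator {-c<..<c} (ip d (fst (fst \<omega>)) a) + indicator {-(2*c)<..<2*c} (ip d (fst (fst \<omega>)) ths)
         + (snd (fst \<omega>))\<^sup>2 / c\<^sup>2 + 1 / c ^ 4"
    using AE_mor_model_sign
    by eventually_elim (rule response_sq_mul_sq_div_le[OF c _ resp_eq])
  ultimately show ?thesis
    using p(2) q(2) a ths c
    by (intro integral_le_if_AE_le_has_bochner_integral) auto
qed

lemma integral_response_sq_div_le:
  assumes c: "0 < c" and a: "0 < enorm d a"
  shows "(\<integral>\<omega>. (resp d ths \<omega>)\<^sup>2
            / (exp (resp d ths \<omega> * ip d (fst (fst \<omega>)) a)
               + exp (- (resp d ths \<omega> * ip d (fst (fst \<omega>)) a))) ^ 4 \<partial>mor_model d)
         \<le> 1 / c\<^sup>2 + 10 * c ^ 3 / enorm d a + 12 * enorm d (\<lambda>i. a i - ths i) ^ 4 / c\<^sup>2 + 6 / c\<^sup>2"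
proof -
  obtain p where p: "has_bochner_integral (mor_model d)
      (\<lambda>\<omega>. indicator {-c<..<c} (ip d (fst (fst \<omega>)) a)) p" "p \<le> c / enorm d a"
    using has_bochner_integral_indicator_ip_mor_model_le[OF a less_imp_le[OF c]] by blast
  have "has_bochner_integral (mor_model d)
      (\<lambda>\<omega>. 1 / c\<^sup>2 + 10 * c\<^sup>2 * indicator {-c<..<c} (ip d (fst (fst \<omega>)) a)
         + 4 * (ip d (fst (fst \<omega>)) (\<lambda>i. a i - ths i)) ^ 4 / c\<^sup>2 + 2 * (snd (fst \<omega>)) ^ 4 / c\<^sup>2)
      (1 / c\<^sup>2 + 10 * c\<^sup>2 * p + 4 * (3 * enorm d (\<lambda>i. a i - ths i) ^ 4) / c\<^sup>2 + 2 * 3 / c\<^sup>2)"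
    by (intro has_bochner_integral_add p(1) has_bochner_integral_divide_zero has_bochner_integral_mult_right
        has_bochner_integral_mor_model_noise has_bochner_integral_mor_model_covariate
        has_bochner_integral_gauss1_power has_bochner_integral_ip_pow4_gauss_vec
        has_bochner_integral_const_prob_space prob_space_mor_model)
  moreover have "AE \<omega> in mor_model d.
      (resp d ths \<omega>)\<^sup>2
        / (exp (resp d ths \<omega> * ip d (fst (fst \<omega>)) a) + exp (- (resp d ths \<omega> * ip d (fst (fst \<omega>)) a))) ^ 4
      \<le> 1 / c\<^sup>2 + 10 * c\<^sup>2 * indicator {-c<..<c} (ip d (fst (fst \<omega>)) a)
         + 4 * (ip d (fst (fst \<omega>)) (\<lambda>i. a i - ths i)) ^ 4 / c\<^sup>2 + 2 * (snd (fst \<omega>)) ^ 4 / c\<^sup>2"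
    using AE_mor_model_sign
    by eventually_elim (simp only: ip_diff, rule response_sq_div_le[OF c _ resp_eq])
  moreover have "10 * c\<^sup>2 * p \<le> 10 * c ^ 3 / enorm d a"
    using mult_left_mono[OF p(2), of "10 * c\<^sup>2"] by (simp add: power2_eq_square power3_eq_cube)
  ultimately show ?thesis
    using a c by (intro integral_le_if_AE_le_has_bochner_integral) auto
qed

lemma sqrt_integral_response_sq_ip_sq_div_le_concrete:
  assumes "5 * 10 ^ 15 \<le> enorm d a" "10 ^ 16 \<le> enorm d ths"
  shows "sqrt (\<integral>\<omega>. (resp d ths \<omega>)\<^sup>2 * (ip d (fst (fst \<omega>)) a)\<^sup>2
            / (exp (resp d ths \<omega> * ip d (fst (fst \<omega>)) a)
               + exp (- (resp d ths \<omega> * ip d (fst (fst \<omega>)) a))) ^ 4 \<partial>mor_model d)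
         \<le> 1 / 70" (is "sqrt ?I \<le> _")
proof (rule sqrt_le_if_le_sq)
  have "?I \<le> 1000 / enorm d a + 2 * 1000 / enorm d ths + 1 / 1000\<^sup>2 + 1 / 1000 ^ 4"
    using assms by (intro integral_response_sq_ip_sq_div_le) auto
  also have "\<dots> \<le> 1000 / (5 * 10 ^ 15) + 2 * 1000 / 10 ^ 16 + 1 / 1000\<^sup>2 + 1 / 1000 ^ 4"
    using assms by (intro add_mono divide_left_mono order_refl) auto
  also have "\<dots> \<le> (1 / 70)\<^sup>2"
    by (simp add: power2_eq_square)
  finally show "?I \<le> (1 / 70)\<^sup>2" .
qed simp

lemma sqrt_integral_response_sq_div_le_concrete:
  assumes "5 * 10 ^ 15 \<le> enorm d a" "enorm d (\<lambda>i. a i - ths i) \<le> 1"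
  shows "sqrt (\<integral>\<omega>. (resp d ths \<omega>)\<^sup>2
            / (exp (resp d ths \<omega> * ip d (fst (fst \<omega>)) a)
               + exp (- (resp d ths \<omega> * ip d (fst (fst \<omega>)) a))) ^ 4 \<partial>mor_model d)
         \<le> 1 / 160" (is "sqrt ?I \<le> _")
proof (rule sqrt_le_if_le_sq)
  have "?I \<le> 1 / 1000\<^sup>2 + 10 * 1000 ^ 3 / enorm d a
      + 12 * enorm d (\<lambda>i. a i - ths i) ^ 4 / 1000\<^sup>2 + 6 / 1000\<^sup>2"
    using assms by (intro integral_response_sq_div_le) auto
  also have "\<dots> \<le> 1 / 1000\<^sup>2 + 10 * 1000 ^ 3 / (5 * 10 ^ 15) + 12 * 1 / 1000\<^sup>2 + 6 / 1000\<^sup>2"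
    using assms
    by (intro add_mono divide_left_mono divide_right_mono mult_left_mono order_refl)
       (auto simp: power_le_one enorm_nonneg)
  also have "\<dots> \<le> (1 / 160)\<^sup>2"
    by (simp add: power2_eq_square)
  finally show "?I \<le> (1 / 160)\<^sup>2" .
qed simp

theorem lemma6:
  shows "\<exists>\<eta>0 > (0::real). \<exists>\<gamma>::real. 0 \<le> \<gamma> \<and> \<gamma> < 1/4 \<and>
    (\<forall>(d::nat) (ths::nat \<Rightarrow> real) (th::nat \<Rightarrow> real) (u::real).
       enorm d ths \<ge> \<eta>0 \<longrightarrow>
       enorm d (\<lambda>i. th i - ths i) \<le> enorm d ths / 32 \<longrightarrow>
       0 \<le> u \<longrightarrow> u \<le> 1 \<longrightarrow>
       (let thu = (\<lambda>i. ths i + u * (th i - ths i));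
            W = (\<lambda>\<omega>. resp d ths \<omega> * ip d (fst (fst \<omega>)) thu)
        in sqrt (\<integral>\<omega>. (resp d ths \<omega>)\<^sup>2 * (ip d (fst (fst \<omega>)) thu)\<^sup>2
                        / (exp (W \<omega>) + exp (- W \<omega>)) ^ 4 \<partial>mor_model d) \<le> \<gamma> / 14
           \<and> (enorm d (\<lambda>i. th i - ths i) \<le> 1 \<longrightarrow>
                sqrt (\<integral>\<omega>. (resp d ths \<omega>)\<^sup>2 / (exp (W \<omega>) + exp (- W \<omega>)) ^ 4 \<partial>mor_model d)
                  \<le> \<gamma> / 32)))"
proof (rule exI[of _ "10 ^ 16"], intro conjI exI[of _ "1 / 5"] allI impI)
  fix d ths th and u :: real
  assume ths: "10 ^ 16 \<le> enorm d ths" and th: "enorm d (\<lambda>i. th i - ths i) \<le> enorm d ths / 32"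
    and u: "0 \<le> u" "u \<le> 1"
  define a where "a = (\<lambda>i. ths i + u * (th i - ths i))"
  have a_ths: "enorm d (\<lambda>i. a i - ths i) \<le> enorm d (\<lambda>i. th i - ths i)"
    unfolding a_def using u by (rule enorm_interpolant_diff_le)
  then have a: "5 * 10 ^ 15 \<le> enorm d a"
    using enorm_le_add_enorm_diff[of d ths a] ths th by simp
  show "let thu = (\<lambda>i. ths i + u * (th i - ths i));
            W = (\<lambda>\<omega>. resp d ths \<omega> * ip d (fst (fst \<omega>)) thu)
        in sqrt (\<integral>\<omega>. (resp d ths \<omega>)\<^sup>2 * (ip d (fst (fst \<omega>)) thu)\<^sup>2
                        / (exp (W \<omega>) + exp (- W \<omega>)) ^ 4 \<partial>mor_model d) \<le> 1 / 5 / 14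
           \<and> (enorm d (\<lambda>i. th i - ths i) \<le> 1 \<longrightarrow>
                sqrt (\<integral>\<omega>. (resp d ths \<omega>)\<^sup>2 / (exp (W \<omega>) + exp (- W \<omega>)) ^ 4 \<partial>mor_model d)
                  \<le> 1 / 5 / 32)"
    unfolding Let_def a_def[symmetric]
    using sqrt_integral_response_sq_ip_sq_div_le_concrete[OF a ths]
      sqrt_integral_response_sq_div_le_concrete[OF a] a_ths
    by auto
qed simp_all

end
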